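(* Let $\mathbb{F}$ be any field and let $\Phi: M_n(\mathbb{F}) \to M_r(\mathbb{F})$ be a linear map preserving zero products. If $\Phi(I_n)$ is an idempotent, then there exist a nonnegative integer $k$ with $kn\le r$ and a nonsingular $S \in M_r(\mathbb{F})$ such that $$\Phi(I_n)\Phi(A) = \Phi(A)\Phi(I_n) = S\begin{pmatrix} I_k\otimes A & 0\\ 0 & 0_{r-kn}\end{pmatrix}S^{-1}\quad\text{for all } A\in M_n(\mathbb{F});$$ in particular $\Psi_1 := \Phi(I_n)\Phi(\cdot)$ is an algebra homomorphism. Moreover $\Psi_0 := (I_r - \Phi(I_n))\Phi(\cdot)$ is a linear map satisfying $\Psi_0(X)\Psi_0(Y) = 0$ for all $X,Y \in M_n(\mathbb{F})$, and $\Phi = \Psi_1 + \Psi_0$. If $\Phi(I_n) = I_r$, then $\Phi$ is a unital algebra homomorphism of the form $A \mapsto S(I_k\otimes A)S^{-1}$ (with $r = nk$).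
   Context: A map $\Phi$ preserves zero products if $\Phi(A)\Phi(B)=0$ whenever $AB=0$. An algebra homomorphism is a linear multiplicative map. $I_k\otimes A$ denotes the block diagonal matrix $A\oplus\cdots\oplus A$ with $k$ copies of $A$. *)

theory Defs
  imports "Jordan_Normal_Form.Matrix"
begin

text \<open>Block diagonal matrix I_k (x) A = A (+) ... (+) A (k copies), for a square matrix A.\<close>
definition kron_id :: "nat \<Rightarrow> 'a::zero mat \<Rightarrow> 'a mat" where
  "kron_id k A = (let n = dim_row A in
     mat (k * n) (k * n) (\<lambda>(i, j). if i div n = j div n then A $$ (i mod n, j mod n) else 0))"

definition padded_kron_id :: "nat \<Rightarrow> nat \<Rightarrow> 'a::zero mat \<Rightarrow> 'a mat" where
  "padded_kron_id r k A = (let m = k * dim_row A in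
     four_block_mat (kron_id k A) (0\<^sub>m m (r - m)) (0\<^sub>m (r - m) m) (0\<^sub>m (r - m) (r - m)))"

definition linear_mat_map :: "nat \<Rightarrow> nat \<Rightarrow> ('a::field mat \<Rightarrow> 'a mat) \<Rightarrow> bool" where
  "linear_mat_map n r \<Phi> \<longleftrightarrow>
     (\<forall>A \<in> carrier_mat n n. \<Phi> A \<in> carrier_mat r r) \<and>
     (\<forall>A \<in> carrier_mat n n. \<forall>B \<in> carrier_mat n n. \<Phi> (A + B) = \<Phi> A + \<Phi> B) \<and>
     (\<forall>c. \<forall>A \<in> carrier_mat n n. \<Phi> (c \<cdot>\<^sub>m A) = c \<cdot>\<^sub>m \<Phi> A)"

definition preserves_zero_products :: "nat \<Rightarrow> nat \<Rightarrow> ('a::field mat \<Rightarrow> 'a mat) \<Rightarrow> bool" where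
  "preserves_zero_products n r \<Phi> \<longleftrightarrow>
     (\<forall>A \<in> carrier_mat n n. \<forall>B \<in> carrier_mat n n.
        A * B = 0\<^sub>m n n \<longrightarrow> \<Phi> A * \<Phi> B = 0\<^sub>m r r)"

definition algebra_hom_mat :: "nat \<Rightarrow> nat \<Rightarrow> ('a::field mat \<Rightarrow> 'a mat) \<Rightarrow> bool" where
  "algebra_hom_mat n r \<Phi> \<longleftrightarrow> linear_mat_map n r \<Phi> \<and>
     (\<forall>A \<in> carrier_mat n n. \<forall>B \<in> carrier_mat n n. \<Phi> (A * B) = \<Phi> A * \<Phi> B)"

end

theory Submission
  imports Defs "Jordan_Normal_Form.Determinant"
begin

text \<open>For a zero-product preserver \<Phi> and an idempotent E, the products (AE)((1 - E)B) and
  (A(1 - E))(EB) vanish, which yields \<Phi>(AE)\<Phi>(B) = \<Phi>(A)\<Phi>(EB). Both sides are linear in E and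
  the idempotents span M_n, so the identity holds for every E; with A = 1 it reads
  \<Phi>(A)\<Phi>(B) = \<Phi>(1)\<Phi>(AB). Hence the idempotent \<Phi>(1) commutes with the image of \<Phi>,
  \<Phi>(1)\<Phi>(-) is an algebra homomorphism and (1 - \<Phi>(1))\<Phi>(-) has zero products.

  An algebra homomorphism \<psi> : M_n \<rightarrow> M_r is brought into normal form by factoring the idempotents
  \<psi>(E_00) = X1 Y1 and 1 - \<psi>(1) = X2 Y2 through identity matrices of sizes k and m. The columns of
  the matrices \<psi>(E_a0) X1 (a < n) and of X2 form a matrix S with a two-sided inverse, so
  kn + m = r, and \<psi>(A) S = S ((I_k \<otimes> A) \<oplus> 0).\<close>

lemma index_mult_mat_sum:
  assumes "A \<in> carrier_mat a b" "B \<in> carrier_mat b c" "i < a" "j < c"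
  shows "(A * B) $$ (i,j) = (\<Sum>l<b. A $$ (i,l) * B $$ (l,j))"
  using assms by (auto simp: scalar_prod_def lessThan_atLeast0 intro!: sum.cong)

lemma assoc_mult_mat_middle:
  assumes A: "A \<in> carrier_mat a b" and B: "B \<in> carrier_mat b c"
    and C: "C \<in> carrier_mat c d" and D: "D \<in> carrier_mat d e"
  shows "A * B * (C * D) = A * (B * C) * (D :: 'f::semiring_0 mat)"
proof -
  have "A * B * (C * D) = A * (B * (C * D))" using assoc_mult_mat[OF A B mult_carrier_mat[OF C D]] .
  also have "B * (C * D) = B * C * D" using assoc_mult_mat[OF B C D] by simp
  also have "A * (B * C * D) = A * (B * C) * D" using assoc_mult_mat[OF A mult_carrier_mat[OF B C] D] by simp
  finally show ?thesis .
qed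

lemma sum_lessThan_add:
  fixes a b :: nat
  shows "(\<Sum>c<a+b. f c) = (\<Sum>c<a. f c) + (\<Sum>c<b. (f (a+c) :: 'a::comm_monoid_add))"
  by (induct b) (simp_all add: add.assoc)

lemma sum_lessThan_mult_blocks:
  fixes k n :: nat
  shows "(\<Sum>c<k*n. f c) = (\<Sum>t<k. \<Sum>a<n. (f (t*n+a) :: 'a::comm_monoid_add))"
proof (induct k)
  case (Suc k)
  have "(\<Sum>c<Suc k * n. f c) = (\<Sum>c<k*n + n. f c)" by (simp add: add.commute)
  also have "\<dots> = (\<Sum>c<k*n. f c) + (\<Sum>a<n. f (k*n+a))" by (rule sum_lessThan_add)
  finally show ?case using Suc by simp
qed simp

lemma block_index_bounds:
  assumes "t < k" "a < (n::nat)"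
  shows "t*n + a < k*n" "(t*n + a) div n = t" "(t*n + a) mod n = a"
proof -
  have "t*n + a < Suc t * n" using assms(2) by simp
  also have "\<dots> \<le> k * n" using assms(1) by (intro mult_le_mono1) simp
  finally show "t*n + a < k*n" .
  show "(t*n + a) div n = t" "(t*n + a) mod n = a" using assms(2) by simp_all
qed

lemma eq_iff_div_eq_mod_eq: "0 < (n::nat) \<Longrightarrow> c = d \<longleftrightarrow> c div n = d div n \<and> c mod n = d mod n"
  by (metis div_mult_mod_eq)

text \<open>Pad S and T with zeros to square matrices of size N; then T' S' = 1 forces S' T' = 1,
  whose last diagonal entry vanishes if r < N.\<close>
lemma left_inverse_imp_dim_le:
  fixes S T :: "'a::field mat"
  assumes S: "S \<in> carrier_mat r N" and T: "T \<in> carrier_mat N r" and TS: "T * S = 1\<^sub>m N"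
  shows "N \<le> r"
proof (rule ccontr)
  assume "\<not> N \<le> r"
  hence rN: "r < N" by simp
  define S' where "S' = mat N N (\<lambda>(i,j). if i < r then S $$ (i,j) else 0)"
  define T' where "T' = mat N N (\<lambda>(i,j). if j < r then T $$ (i,j) else 0)"
  have S'c: "S' \<in> carrier_mat N N" and T'c: "T' \<in> carrier_mat N N" by (auto simp: S'_def T'_def)
  have "T' * S' = 1\<^sub>m N"
  proof (rule eq_matI)
    fix i j assume ij: "i < dim_row (1\<^sub>m N :: 'a mat)" "j < dim_col (1\<^sub>m N :: 'a mat)"
    have "(T' * S') $$ (i,j) = (\<Sum>l<N. T' $$ (i,l) * S' $$ (l,j))"
      using ij by (intro index_mult_mat_sum[OF T'c S'c]) auto
    also have "\<dots> = (\<Sum>l<N. if l < r then T $$ (i,l) * S $$ (l,j) else 0)"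
      using ij by (intro sum.cong) (auto simp: S'_def T'_def)
    also have "\<dots> = (\<Sum>l<r. T $$ (i,l) * S $$ (l,j))"
    proof -
      have "{..<N} \<inter> {l. l < r} = {..<r}" using rN by auto
      thus ?thesis by (simp add: sum.If_cases)
    qed
    also have "\<dots> = (T * S) $$ (i,j)" using ij by (intro index_mult_mat_sum[symmetric, OF T S]) auto
    finally show "(T' * S') $$ (i,j) = 1\<^sub>m N $$ (i,j)" using TS by simp
  qed (use S'c T'c in auto)
  hence "S' * T' = 1\<^sub>m N" by (rule mat_mult_left_right_inverse[OF T'c S'c])
  hence "(S' * T') $$ (N-1,N-1) = 1" using rN by simp
  moreover have "(S' * T') $$ (N-1,N-1) = (\<Sum>l<N. S' $$ (N-1,l) * T' $$ (l,N-1))"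
    using rN by (intro index_mult_mat_sum[OF S'c T'c]) auto
  moreover have "\<dots> = 0" using rN by (intro sum.neutral) (auto simp: S'_def)
  ultimately show False by simp
qed

section \<open>Factoring idempotent matrices\<close>

definition cols_lin_indpt :: "'a::field mat \<Rightarrow> nat list \<Rightarrow> bool" where
  "cols_lin_indpt Q J \<longleftrightarrow> (\<forall>c.
     (\<forall>i<dim_row Q. (\<Sum>t<length J. Q $$ (i, J!t) * c t) = 0) \<longrightarrow> (\<forall>t<length J. c t = 0))"

definition in_col_span :: "'a::field mat \<Rightarrow> nat list \<Rightarrow> nat \<Rightarrow> bool" where
  "in_col_span Q J j \<longleftrightarrow> (\<exists>c. \<forall>i<dim_row Q. Q $$ (i,j) = (\<Sum>t<length J. Q $$ (i, J!t) * c t))"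

lemma sum_mult_delta:
  fixes f :: "nat \<Rightarrow> 'a::semiring_1"
  shows "(\<Sum>s<k. f s * (if s = t then 1 else 0)) = (if t < k then f t else 0)"
  by (induct k) (auto simp: less_Suc_eq)

lemma in_col_span_member: "j \<in> set J \<Longrightarrow> in_col_span Q J j"
proof -
  assume "j \<in> set J"
  then obtain t where t: "t < length J" "J!t = j" by (auto simp: in_set_conv_nth)
  show ?thesis unfolding in_col_span_def
    by (rule exI[of _ "\<lambda>s. if s = t then 1 else 0"]) (use t in \<open>simp add: sum_mult_delta\<close>)
qed

lemma cols_lin_indpt_snoc:
  assumes ind: "cols_lin_indpt Q J" and j: "\<not> in_col_span Q J j"
  shows "cols_lin_indpt Q (J @ [j])"
  unfolding cols_lin_indpt_def
proof (rule allI, rule impI)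
  fix c :: "nat \<Rightarrow> 'a"
  let ?k = "length J"
  assume z: "\<forall>i<dim_row Q. (\<Sum>t<length (J @ [j]). Q $$ (i, (J @ [j]) ! t) * c t) = 0"
  have h: "(\<Sum>t<?k. Q $$ (i, J!t) * c t) + Q $$ (i,j) * c ?k = 0" if "i < dim_row Q" for i
  proof -
    have "(\<Sum>t<?k. Q $$ (i, (J @ [j]) ! t) * c t) = (\<Sum>t<?k. Q $$ (i, J!t) * c t)"
      by (intro sum.cong) (auto simp: nth_append)
    thus ?thesis using z[rule_format, OF that] by simp
  qed
  have ck: "c ?k = 0"
  proof (rule ccontr)
    assume ck: "c ?k \<noteq> 0"
    have "Q $$ (i,j) = (\<Sum>t<?k. Q $$ (i, J!t) * (- c t / c ?k))" if "i < dim_row Q" for i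
    proof -
      have e: "Q $$ (i,j) * c ?k = - (\<Sum>t<?k. Q $$ (i, J!t) * c t)"
        using h[OF that] by (simp add: eq_neg_iff_add_eq_0 add.commute)
      have "(\<Sum>t<?k. Q $$ (i, J!t) * (- c t / c ?k)) = - (\<Sum>t<?k. Q $$ (i, J!t) * c t) / c ?k"
        by (simp add: sum_divide_distrib sum_negf)
      also have "\<dots> = Q $$ (i,j)" using ck by (simp add: e[symmetric])
      finally show ?thesis by simp
    qed
    hence "in_col_span Q J j" unfolding in_col_span_def by (intro exI[of _ "\<lambda>t. - c t / c ?k"]) blast
    with j show False ..
  qed
  have "\<forall>t<?k. c t = 0" using ind h ck unfolding cols_lin_indpt_def by simp
  with ck show "\<forall>t<length (J @ [j]). c t = 0" by (auto simp: less_Suc_eq)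
qed

text \<open>A longest list of distinct, linearly independent columns spans all columns.\<close>
lemma column_basis_exists:
  fixes Q :: "'a::field mat"
  obtains J where "set J \<subseteq> {..<dim_col Q}" "cols_lin_indpt Q J"
    "\<And>j. j < dim_col Q \<Longrightarrow> in_col_span Q J j"
proof -
  define good where "good J \<longleftrightarrow> distinct J \<and> set J \<subseteq> {..<dim_col Q} \<and> cols_lin_indpt Q J" for J
  have "good []" by (simp add: good_def cols_lin_indpt_def)
  moreover have "length J < Suc (dim_col Q)" if "good J" for J
  proof -
    have "length J = card (set J)" using that by (simp add: good_def distinct_card)
    also have "\<dots> \<le> card {..<dim_col Q}" using that by (intro card_mono) (auto simp: good_def)
    finally show ?thesis by simp
  qed
  ultimately obtain J where J: "good J" and max: "\<And>J'. good J' \<Longrightarrow> length J' \<le> length J"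
    using ex_has_greatest_nat[of good "[]" length "Suc (dim_col Q)"] by blast
  have "in_col_span Q J j" if j: "j < dim_col Q" for j
  proof (rule ccontr)
    assume ns: "\<not> in_col_span Q J j"
    hence "j \<notin> set J" using in_col_span_member by blast
    hence "good (J @ [j])" using J j cols_lin_indpt_snoc[OF _ ns] by (auto simp: good_def)
    from max[OF this] show False by simp
  qed
  with J that show ?thesis by (auto simp: good_def)
qed

lemma idempotent_compl_mat:
  assumes P: "P \<in> carrier_mat r r" and PP: "P * P = (P :: 'a::ring_1 mat)"
  shows "(1\<^sub>m r - P) * (1\<^sub>m r - P) = 1\<^sub>m r - P"
proof -
  have R: "1\<^sub>m r - P \<in> carrier_mat r r" using P by (rule minus_carrier_mat)
  have "(1\<^sub>m r - P) * (1\<^sub>m r - P) = 1\<^sub>m r * (1\<^sub>m r - P) - P * (1\<^sub>m r - P)"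
    by (rule minus_mult_distrib_mat[OF one_carrier_mat P R])
  also have "P * (1\<^sub>m r - P) = P * 1\<^sub>m r - P * P" by (rule mult_minus_distrib_mat[OF P one_carrier_mat P])
  finally have "(1\<^sub>m r - P) * (1\<^sub>m r - P) = (1\<^sub>m r - P) - (P - P)" using P R PP by simp
  also have "\<dots> = 1\<^sub>m r - P" using P by (intro eq_matI) auto
  finally show ?thesis .
qed

lemma mult_eq_self_imp_one_mat:
  fixes X M :: "'a::field mat"
  assumes X: "X \<in> carrier_mat r k" and M: "M \<in> carrier_mat k k" and XM: "X * M = X"
    and indpt: "\<And>c. \<forall>i<r. (\<Sum>t<k. X $$ (i,t) * c t) = 0 \<Longrightarrow> \<forall>t<k. c t = 0"
  shows "M = 1\<^sub>m k"
proof (rule eq_matI)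
  fix t s assume "t < dim_row (1\<^sub>m k :: 'a mat)" "s < dim_col (1\<^sub>m k :: 'a mat)"
  hence ts: "t < k" "s < k" by auto
  define c where "c u = M $$ (u,s) - (if u = s then 1 else 0)" for u
  have "(\<Sum>u<k. X $$ (i,u) * c u) = 0" if i: "i < r" for i
  proof -
    have "(\<Sum>u<k. X $$ (i,u) * c u)
        = (\<Sum>u<k. X $$ (i,u) * M $$ (u,s)) - (\<Sum>u<k. X $$ (i,u) * (if u = s then 1 else 0))"
      by (simp add: c_def right_diff_distrib sum_subtractf)
    also have "(\<Sum>u<k. X $$ (i,u) * M $$ (u,s)) = (X * M) $$ (i,s)"
      using i ts by (intro index_mult_mat_sum[symmetric, OF X M])
    also have "\<dots> = X $$ (i,s)" using XM by simp
    also have "(\<Sum>u<k. X $$ (i,u) * (if u = s then 1 else 0)) = X $$ (i,s)"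
      using ts by (simp add: sum_mult_delta)
    finally show ?thesis by simp
  qed
  hence "\<forall>u<k. c u = 0" using indpt by blast
  thus "M $$ (t,s) = 1\<^sub>m k $$ (t,s)" using ts by (simp add: c_def)
qed (use M in auto)

text \<open>X collects a column basis of the range of Q, Y the coordinates of all columns of Q in it.\<close>
lemma idempotent_mat_factor:
  fixes Q :: "'a::field mat"
  assumes Q: "Q \<in> carrier_mat r r" and QQ: "Q * Q = Q"
  obtains k X Y where "X \<in> carrier_mat r k" "Y \<in> carrier_mat k r" "Y * X = 1\<^sub>m k" "X * Y = Q"
proof -
  obtain J where Jr: "set J \<subseteq> {..<r}" and ind: "cols_lin_indpt Q J"
    and span: "\<And>j. j < r \<Longrightarrow> in_col_span Q J j"
    using column_basis_exists[of Q] Q by auto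
  define k where "k = length J"
  define C where "C j = (SOME c. \<forall>i<r. Q $$ (i,j) = (\<Sum>t<k. Q $$ (i, J!t) * c t))" for j
  have C: "Q $$ (i,j) = (\<Sum>t<k. Q $$ (i, J!t) * C j t)" if "i < r" "j < r" for i j
    using someI_ex[OF span[OF that(2), unfolded in_col_span_def]] that Q
    unfolding C_def k_def by auto
  define X where "X = mat r k (\<lambda>(i,t). Q $$ (i, J!t))"
  define Y where "Y = mat k r (\<lambda>(t,j). C j t)"
  have X: "X \<in> carrier_mat r k" and Y: "Y \<in> carrier_mat k r" by (auto simp: X_def Y_def)
  have XY: "X * Y = Q"
  proof (rule eq_matI)
    fix i j assume "i < dim_row Q" "j < dim_col Q"
    hence ij: "i < r" "j < r" using Q by auto
    have "(X * Y) $$ (i,j) = (\<Sum>t<k. X $$ (i,t) * Y $$ (t,j))" using ij by (intro index_mult_mat_sum[OF X Y])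
    also have "\<dots> = (\<Sum>t<k. Q $$ (i, J!t) * C j t)" using ij by (intro sum.cong) (auto simp: X_def Y_def)
    finally show "(X * Y) $$ (i,j) = Q $$ (i,j)" using C[OF ij] by simp
  qed (use X Y Q in auto)
  have JQ: "J!t < r" if "t < k" for t using Jr that nth_mem unfolding k_def by fastforce
  have QX: "Q * X = X"
  proof (rule eq_matI)
    fix i t assume "i < dim_row X" "t < dim_col X"
    hence it: "i < r" "t < k" using X by auto
    have "(Q * X) $$ (i,t) = (\<Sum>l<r. Q $$ (i,l) * X $$ (l,t))" using it by (intro index_mult_mat_sum[OF Q X])
    also have "\<dots> = (\<Sum>l<r. Q $$ (i,l) * Q $$ (l,J!t))" using it by (intro sum.cong) (auto simp: X_def)
    also have "\<dots> = (Q * Q) $$ (i, J!t)" using it JQ by (intro index_mult_mat_sum[symmetric, OF Q Q]) auto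
    finally show "(Q * X) $$ (i,t) = X $$ (i,t)" using QQ it JQ by (simp add: X_def)
  qed (use X Q in auto)
  have "(\<Sum>t<k. X $$ (i,t) * c t) = (\<Sum>t<k. Q $$ (i, J!t) * c t)" if "i < r" for i c
    using that by (intro sum.cong) (auto simp: X_def)
  hence indpt: "\<forall>t<k. c t = 0" if "\<forall>i<r. (\<Sum>t<k. X $$ (i,t) * c t) = 0" for c
    using ind that Q unfolding cols_lin_indpt_def k_def by simp
  have "X * (Y * X) = X" using QX XY assoc_mult_mat[OF X Y X] by simp
  hence "Y * X = 1\<^sub>m k" by (rule mult_eq_self_imp_one_mat[OF X mult_carrier_mat[OF Y X] _ indpt])
  from X Y this XY show ?thesis by (rule that)
qed

section \<open>Linear maps on matrix algebras\<close>

definition mat_unit :: "nat \<Rightarrow> nat \<Rightarrow> nat \<Rightarrow> 'a::field mat" where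
  "mat_unit n a b = mat n n (\<lambda>(i,j). if i = a \<and> j = b then 1 else 0)"

lemma mat_unit_carrier[simp]: "mat_unit n a b \<in> carrier_mat n n"
  by (simp add: mat_unit_def)

lemma dim_mat_unit[simp]: "dim_row (mat_unit n a b) = n" "dim_col (mat_unit n a b) = n"
  by (simp_all add: mat_unit_def)

lemma index_mat_unit[simp]:
  "i < n \<Longrightarrow> j < n \<Longrightarrow> mat_unit n a b $$ (i,j) = (if i = a \<and> j = b then 1 else 0)"
  by (simp add: mat_unit_def)

lemma mat_unit_mult:
  assumes "b < n" "c < n"
  shows "mat_unit n a b * (mat_unit n c d :: 'a::field mat) = (if b = c then mat_unit n a d else 0\<^sub>m n n)"
proof (rule eq_matI)
  fix i j assume "i < dim_row (if b = c then mat_unit n a d else 0\<^sub>m n n :: 'a mat)"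
    "j < dim_col (if b = c then mat_unit n a d else 0\<^sub>m n n :: 'a mat)"
  hence ij: "i < n" "j < n" by (auto split: if_splits)
  have "(mat_unit n a b * mat_unit n c d) $$ (i,j)
      = (\<Sum>l<n. mat_unit n a b $$ (i,l) * (mat_unit n c d :: 'a mat) $$ (l,j))"
    using ij by (intro index_mult_mat_sum) auto
  also have "\<dots> = (\<Sum>l<n. if l = b then (if i = a \<and> b = c \<and> j = d then 1 else 0) else 0)"
    using ij by (intro sum.cong) auto
  also have "\<dots> = (if i = a \<and> b = c \<and> j = d then 1 else 0)" using assms by simp
  finally show "(mat_unit n a b * mat_unit n c d) $$ (i,j)
      = (if b = c then mat_unit n a d else 0\<^sub>m n n :: 'a mat) $$ (i,j)"
    using ij by auto
qed auto

fun mat_sum_list :: "nat \<Rightarrow> ('b \<Rightarrow> 'a::field mat) \<Rightarrow> 'b list \<Rightarrow> 'a mat" where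
  "mat_sum_list r f [] = 0\<^sub>m r r"
| "mat_sum_list r f (x # xs) = f x + mat_sum_list r f xs"

lemma mat_sum_list_carrier:
  "(\<And>x. x \<in> set xs \<Longrightarrow> f x \<in> carrier_mat r r) \<Longrightarrow> mat_sum_list r f xs \<in> carrier_mat r r"
  by (induct xs) auto

lemma index_mat_sum_list:
  "(\<And>x. x \<in> set xs \<Longrightarrow> f x \<in> carrier_mat r r) \<Longrightarrow> i < r \<Longrightarrow> j < r \<Longrightarrow>
   mat_sum_list r f xs $$ (i,j) = (\<Sum>x\<leftarrow>xs. f x $$ (i,j))"
proof (induct xs)
  case (Cons x xs)
  have "mat_sum_list r f xs \<in> carrier_mat r r" using Cons by (intro mat_sum_list_carrier) auto
  thus ?case using Cons by auto
qed auto

definition index_pairs :: "nat \<Rightarrow> (nat \<times> nat) list" where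
  "index_pairs n = List.product [0..<n] [0..<n]"

lemma set_index_pairs: "set (index_pairs n) = {0..<n} \<times> {0..<n}"
  by (simp add: index_pairs_def)

lemma distinct_index_pairs: "distinct (index_pairs n)"
  by (simp add: index_pairs_def distinct_product)

lemma mat_unit_expansion:
  assumes E: "E \<in> carrier_mat n n"
  shows "E = mat_sum_list n (\<lambda>(a,b). E $$ (a,b) \<cdot>\<^sub>m (mat_unit n a b :: 'a::field mat)) (index_pairs n)"
    (is "E = ?sum")
proof (rule eq_matI)
  let ?f = "\<lambda>(a,b). E $$ (a,b) \<cdot>\<^sub>m (mat_unit n a b :: 'a mat)"
  have f: "\<And>x. ?f x \<in> carrier_mat n n" by auto
  have sum: "?sum \<in> carrier_mat n n" by (rule mat_sum_list_carrier) auto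
  show "dim_row E = dim_row ?sum" "dim_col E = dim_col ?sum" using sum E by auto
  fix i j assume "i < dim_row ?sum" "j < dim_col ?sum"
  hence ij: "i < n" "j < n" using sum by auto
  have "?sum $$ (i,j) = (\<Sum>x\<leftarrow>index_pairs n. ?f x $$ (i,j))"
    by (rule index_mat_sum_list[OF f ij])
  also have "\<dots> = (\<Sum>x\<in>set (index_pairs n). ?f x $$ (i,j))"
    by (rule sum.distinct_set_conv_list[symmetric, OF distinct_index_pairs])
  also have "\<dots> = (\<Sum>x\<in>{0..<n} \<times> {0..<n}. if x = (i,j) then E $$ (i,j) else 0)"
    unfolding set_index_pairs using ij by (intro sum.cong) (auto split: if_splits)
  also have "\<dots> = E $$ (i,j)" using ij by simp
  finally show "E $$ (i,j) = ?sum $$ (i,j)" by simp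
qed

lemma linear_mat_map_carrier:
  "linear_mat_map n r \<Phi> \<Longrightarrow> A \<in> carrier_mat n n \<Longrightarrow> \<Phi> A \<in> carrier_mat r r"
  unfolding linear_mat_map_def by blast

lemma linear_mat_map_add:
  "linear_mat_map n r \<Phi> \<Longrightarrow> A \<in> carrier_mat n n \<Longrightarrow> B \<in> carrier_mat n n \<Longrightarrow> \<Phi> (A + B) = \<Phi> A + \<Phi> B"
  unfolding linear_mat_map_def by blast

lemma linear_mat_map_smult:
  "linear_mat_map n r \<Phi> \<Longrightarrow> A \<in> carrier_mat n n \<Longrightarrow> \<Phi> (c \<cdot>\<^sub>m A) = c \<cdot>\<^sub>m \<Phi> A"
  unfolding linear_mat_map_def by blast

lemma linear_mat_map_zero:
  assumes lin: "linear_mat_map n r \<Phi>"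
  shows "\<Phi> (0\<^sub>m n n) = 0\<^sub>m r r"
proof -
  have "\<Phi> (0\<^sub>m n n) = \<Phi> (0 \<cdot>\<^sub>m 0\<^sub>m n n)" by (intro arg_cong[where f=\<Phi>] eq_matI) auto
  also have "\<dots> = 0 \<cdot>\<^sub>m \<Phi> (0\<^sub>m n n)" by (rule linear_mat_map_smult[OF lin]) simp
  also have "\<dots> = 0\<^sub>m r r" using linear_mat_map_carrier[OF lin, of "0\<^sub>m n n"] by (intro eq_matI) auto
  finally show ?thesis .
qed

lemma minus_eq_add_uminus_smult_mat:
  "A \<in> carrier_mat a b \<Longrightarrow> B \<in> carrier_mat a b \<Longrightarrow> A - B = A + (-1 :: 'a::ring_1) \<cdot>\<^sub>m B"
  by (intro eq_matI) auto

lemma linear_mat_map_minus: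
  assumes lin: "linear_mat_map n r \<Phi>" and A: "A \<in> carrier_mat n n" and B: "B \<in> carrier_mat n n"
  shows "\<Phi> (A - B) = \<Phi> A - \<Phi> B"
proof -
  have "\<Phi> (A - B) = \<Phi> (A + (-1) \<cdot>\<^sub>m B)" using A B by (simp add: minus_eq_add_uminus_smult_mat)
  also have "\<dots> = \<Phi> A + (-1) \<cdot>\<^sub>m \<Phi> B" using A B by (simp add: linear_mat_map_add[OF lin] linear_mat_map_smult[OF lin])
  also have "\<dots> = \<Phi> A - \<Phi> B"
    using A B by (simp add: minus_eq_add_uminus_smult_mat[OF linear_mat_map_carrier[OF lin] linear_mat_map_carrier[OF lin]])
  finally show ?thesis .
qed

lemma linear_mat_map_sum_list:
  assumes lin: "linear_mat_map n r \<Phi>" and f: "\<And>x. x \<in> set xs \<Longrightarrow> f x \<in> carrier_mat n n"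
  shows "\<Phi> (mat_sum_list n f xs) = mat_sum_list r (\<lambda>x. \<Phi> (f x)) xs"
  using f
proof (induct xs)
  case Nil thus ?case using linear_mat_map_zero[OF lin] by simp
next
  case (Cons x xs)
  have "mat_sum_list n f xs \<in> carrier_mat n n" using Cons by (intro mat_sum_list_carrier) auto
  thus ?case using Cons linear_mat_map_add[OF lin] by auto
qed

lemma linear_mat_map_index:
  assumes lin: "linear_mat_map n r \<Phi>" and M: "M \<in> carrier_mat n n" and ij: "i < r" "j < r"
  shows "\<Phi> M $$ (i,j) = (\<Sum>a<n. \<Sum>b<n. M $$ (a,b) * \<Phi> (mat_unit n a b) $$ (i,j))"
proof -
  let ?f = "\<lambda>(a,b). M $$ (a,b) \<cdot>\<^sub>m (mat_unit n a b :: 'a mat)"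
  have f: "\<And>x. \<Phi> (?f x) \<in> carrier_mat r r" using linear_mat_map_carrier[OF lin] by auto
  have "\<Phi> M = mat_sum_list r (\<lambda>x. \<Phi> (?f x)) (index_pairs n)"
    using mat_unit_expansion[OF M] linear_mat_map_sum_list[OF lin, of "index_pairs n" ?f] by auto
  hence "\<Phi> M $$ (i,j) = (\<Sum>x\<leftarrow>index_pairs n. \<Phi> (?f x) $$ (i,j))"
    using index_mat_sum_list[OF f ij] by simp
  also have "\<dots> = (\<Sum>x\<in>{0..<n} \<times> {0..<n}. \<Phi> (?f x) $$ (i,j))"
    by (simp add: sum.distinct_set_conv_list[symmetric, OF distinct_index_pairs] set_index_pairs)
  also have "\<dots> = (\<Sum>(a,b)\<in>{0..<n} \<times> {0..<n}. M $$ (a,b) * \<Phi> (mat_unit n a b) $$ (i,j))"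
  proof (rule sum.cong[OF refl])
    fix x :: "nat \<times> nat"
    obtain a b where x: "x = (a,b)" by fastforce
    have "\<Phi> (mat_unit n a b) \<in> carrier_mat r r" by (rule linear_mat_map_carrier[OF lin mat_unit_carrier])
    thus "\<Phi> (?f x) $$ (i,j) = (\<lambda>(a,b). M $$ (a,b) * \<Phi> (mat_unit n a b) $$ (i,j)) x"
      using linear_mat_map_smult[OF lin mat_unit_carrier] ij x by simp
  qed
  also have "\<dots> = (\<Sum>a<n. \<Sum>b<n. M $$ (a,b) * \<Phi> (mat_unit n a b) $$ (i,j))"
    by (simp add: sum.cartesian_product lessThan_atLeast0)
  finally show ?thesis .
qed

lemma linear_mat_maps_eq_on_mat_units:
  assumes G: "linear_mat_map n r G" and H: "linear_mat_map n r H"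
    and units: "\<And>a b. a < n \<Longrightarrow> b < n \<Longrightarrow> G (mat_unit n a b) = H (mat_unit n a b)"
    and E: "E \<in> carrier_mat n n"
  shows "G E = H E"
proof (rule eq_matI)
  show "dim_row (G E) = dim_row (H E)" "dim_col (G E) = dim_col (H E)"
    using linear_mat_map_carrier[OF G E] linear_mat_map_carrier[OF H E] by auto
  fix i j assume "i < dim_row (H E)" "j < dim_col (H E)"
  hence ij: "i < r" "j < r" using linear_mat_map_carrier[OF H E] by auto
  show "G E $$ (i,j) = H E $$ (i,j)"
    unfolding linear_mat_map_index[OF G E ij] linear_mat_map_index[OF H E ij] using units by simp
qed

text \<open>Matrix units are spanned by idempotents: for a \<noteq> b, E_ab = (E_aa + E_ab) - E_aa.\<close>
lemma linear_mat_maps_eq_on_idempotents: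
  assumes G: "linear_mat_map n r G" and H: "linear_mat_map n r H"
    and idem: "\<And>E. E \<in> carrier_mat n n \<Longrightarrow> E * E = E \<Longrightarrow> G E = H E"
    and E: "E \<in> carrier_mat n n"
  shows "G E = H E"
proof (rule linear_mat_maps_eq_on_mat_units[OF G H _ E])
  fix a b assume ab: "a < n" "b < n"
  let ?Eaa = "mat_unit n a a :: 'a mat" and ?Eab = "mat_unit n a b :: 'a mat"
  have Eaa: "G ?Eaa = H ?Eaa" using idem ab by (simp add: mat_unit_mult)
  show "G ?Eab = H ?Eab"
  proof (cases "a = b")
    case True thus ?thesis using Eaa by simp
  next
    case False
    have "(?Eaa + ?Eab) * (?Eaa + ?Eab) = ?Eaa * (?Eaa + ?Eab) + ?Eab * (?Eaa + ?Eab)"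
      by (rule add_mult_distrib_mat) auto
    also have "\<dots> = ?Eaa * ?Eaa + ?Eaa * ?Eab + (?Eab * ?Eaa + ?Eab * ?Eab)"
      by (simp add: mult_add_distrib_mat[OF mat_unit_carrier mat_unit_carrier mat_unit_carrier])
    also have "\<dots> = ?Eaa + ?Eab" using ab False by (simp add: mat_unit_mult)
    finally have F: "G (?Eaa + ?Eab) = H (?Eaa + ?Eab)" using idem by simp
    have Eab: "?Eab = (?Eaa + ?Eab) - ?Eaa" by (intro eq_matI) auto
    have "G ?Eab = G (?Eaa + ?Eab) - G ?Eaa"
      by (subst Eab, rule linear_mat_map_minus[OF G]) auto
    also have "\<dots> = H (?Eaa + ?Eab) - H ?Eaa" using F Eaa by simp
    also have "\<dots> = H ((?Eaa + ?Eab) - ?Eaa)"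
      by (rule linear_mat_map_minus[OF H, symmetric]) auto
    also have "\<dots> = H ?Eab" by (simp only: Eab[symmetric])
    finally show ?thesis .
  qed
qed

lemma linear_mat_map_cong:
  assumes "linear_mat_map n r F" "\<And>A. A \<in> carrier_mat n n \<Longrightarrow> F A = G A"
  shows "linear_mat_map n r G"
  using assms unfolding linear_mat_map_def
  by (intro conjI ballI allI) (metis, metis add_carrier_mat, metis smult_carrier_mat)

lemma linear_mat_map_sandwich:
  fixes \<Phi> :: "'a::field mat \<Rightarrow> 'a mat"
  assumes lin: "linear_mat_map n r \<Phi>"
    and A: "A \<in> carrier_mat n n" and B: "B \<in> carrier_mat n n"
    and L: "L \<in> carrier_mat r r" and M: "M \<in> carrier_mat r r"
  shows "linear_mat_map n r (\<lambda>X. L * \<Phi> (A * X * B) * M)"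
  unfolding linear_mat_map_def
proof (intro conjI ballI allI)
  have \<Phi>: "\<And>X. X \<in> carrier_mat n n \<Longrightarrow> \<Phi> (A * X * B) \<in> carrier_mat r r"
    using A B by (auto intro: linear_mat_map_carrier[OF lin])
  fix X :: "'a mat" assume X: "X \<in> carrier_mat n n"
  show "L * \<Phi> (A * X * B) * M \<in> carrier_mat r r" using L M \<Phi>[OF X] by auto
  fix c
  have "A * (c \<cdot>\<^sub>m X) * B = c \<cdot>\<^sub>m (A * X * B)"
    using A X B by (simp add: mult_smult_distrib mult_smult_assoc_mat[of _ n n])
  then show "L * \<Phi> (A * (c \<cdot>\<^sub>m X) * B) * M = c \<cdot>\<^sub>m (L * \<Phi> (A * X * B) * M)"
    using A X B L M \<Phi>[OF X] by (simp add: linear_mat_map_smult[OF lin] mult_smult_distrib mult_smult_assoc_mat[of _ r r])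
next
  fix X Y :: "'a mat" assume X: "X \<in> carrier_mat n n" and Y: "Y \<in> carrier_mat n n"
  have \<Phi>: "\<And>X. X \<in> carrier_mat n n \<Longrightarrow> \<Phi> (A * X * B) \<in> carrier_mat r r"
    using A B by (auto intro: linear_mat_map_carrier[OF lin])
  have "A * (X + Y) * B = A * X * B + A * Y * B"
    using A X Y B by (simp add: mult_add_distrib_mat[of _ n n] add_mult_distrib_mat[of _ n n])
  then show "L * \<Phi> (A * (X + Y) * B) * M = L * \<Phi> (A * X * B) * M + L * \<Phi> (A * Y * B) * M"
    using A X Y B L M \<Phi>[OF X] \<Phi>[OF Y]
    by (simp add: linear_mat_map_add[OF lin] mult_add_distrib_mat[of _ r r] add_mult_distrib_mat[of _ r r])
qed

section \<open>Algebra homomorphisms from M_n\<close>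

lemma kron_id_carrier: "A \<in> carrier_mat n n \<Longrightarrow> kron_id k A \<in> carrier_mat (k*n) (k*n)"
  unfolding kron_id_def Let_def carrier_mat_def by simp

lemma index_kron_id:
  assumes A: "A \<in> carrier_mat n n" and c: "c < k*n" and d: "d < k*n"
  shows "kron_id k A $$ (c,d) = (if c div n = d div n then A $$ (c mod n, d mod n) else 0)"
  using A c d unfolding kron_id_def Let_def by simp

lemma padded_kron_id_carrier:
  assumes A: "A \<in> carrier_mat n n" and kn: "k*n \<le> r"
  shows "padded_kron_id r k A \<in> carrier_mat r r"
proof -
  have "four_block_mat (kron_id k A) (0\<^sub>m (k*n) (r - k*n)) (0\<^sub>m (r - k*n) (k*n)) (0\<^sub>m (r - k*n) (r - k*n))
     \<in> carrier_mat (k*n + (r - k*n)) (k*n + (r - k*n))"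
    by (rule four_block_carrier_mat[OF kron_id_carrier[OF A] zero_carrier_mat])
  thus ?thesis using A kn unfolding padded_kron_id_def Let_def by simp
qed

lemma index_padded_kron_id:
  assumes A: "A \<in> carrier_mat n n" and kn: "k*n \<le> r" and c: "c < r" and d: "d < r"
  shows "padded_kron_id r k A $$ (c,d) =
    (if c < k*n \<and> d < k*n \<and> c div n = d div n then A $$ (c mod n, d mod n) else 0)"
proof -
  have K: "kron_id k A \<in> carrier_mat (k*n) (k*n)" by (rule kron_id_carrier[OF A])
  have "padded_kron_id r k A = four_block_mat (kron_id k A)
      (0\<^sub>m (k*n) (r - k*n)) (0\<^sub>m (r - k*n) (k*n)) (0\<^sub>m (r - k*n) (r - k*n))"
    using A by (simp add: padded_kron_id_def Let_def)
  hence "padded_kron_id r k A $$ (c,d) = (if c < k*n then if d < k*n then kron_id k A $$ (c,d) else 0 else 0)"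
    using K kn c d by simp
  thus ?thesis using index_kron_id[OF A, of c k d] by auto
qed

lemma padded_kron_id_full:
  assumes A: "A \<in> carrier_mat n n"
  shows "padded_kron_id (k*n) k A = kron_id k A"
proof (rule eq_matI)
  have K: "kron_id k A \<in> carrier_mat (k*n) (k*n)" by (rule kron_id_carrier[OF A])
  have P: "padded_kron_id (k*n) k A \<in> carrier_mat (k*n) (k*n)" by (rule padded_kron_id_carrier[OF A]) simp
  show "dim_row (padded_kron_id (k*n) k A) = dim_row (kron_id k A)"
       "dim_col (padded_kron_id (k*n) k A) = dim_col (kron_id k A)" using K P by auto
  fix i j assume "i < dim_row (kron_id k A)" "j < dim_col (kron_id k A)"
  hence ij: "i < k*n" "j < k*n" using K by auto
  show "padded_kron_id (k*n) k A $$ (i,j) = kron_id k A $$ (i,j)"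
    using index_padded_kron_id[OF A order.refl ij] index_kron_id[OF A ij] ij by simp
qed

lemma algebra_hom_mat_linear: "algebra_hom_mat n r \<psi> \<Longrightarrow> linear_mat_map n r \<psi>"
  unfolding algebra_hom_mat_def by blast

lemma algebra_hom_mat_mult:
  "algebra_hom_mat n r \<psi> \<Longrightarrow> A \<in> carrier_mat n n \<Longrightarrow> B \<in> carrier_mat n n \<Longrightarrow> \<psi> (A * B) = \<psi> A * \<psi> B"
  unfolding algebra_hom_mat_def by blast

lemma mult_mat_unit_right_index:
  assumes A: "A \<in> carrier_mat n n" and b: "b < n" and xy: "x < n" "y < n"
  shows "(A * mat_unit n b c) $$ (x,y) = (if y = c then A $$ (x,b) else 0)"
proof -
  have "(A * mat_unit n b c) $$ (x,y) = (\<Sum>l<n. A $$ (x,l) * mat_unit n b c $$ (l,y))"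
    using xy by (intro index_mult_mat_sum[OF A mat_unit_carrier])
  also have "\<dots> = (\<Sum>l<n. A $$ (x,l) * (if y = c then (if l = b then 1 else 0) else 0))"
    using xy by (intro sum.cong refl) auto
  also have "\<dots> = (if y = c then A $$ (x,b) else 0)"
    using b by (cases "y = c") (simp_all add: sum_mult_delta)
  finally show ?thesis .
qed

lemma linear_mat_map_mult_mat_unit:
  assumes lin: "linear_mat_map n r \<psi>"
    and A: "A \<in> carrier_mat n n" and b: "b < n" and c: "c < n" and i: "i < r" and l: "l < r"
  shows "\<psi> (A * mat_unit n b c) $$ (i,l) = (\<Sum>x<n. A $$ (x,b) * \<psi> (mat_unit n x c) $$ (i,l))"
proof -
  have "\<psi> (A * mat_unit n b c) $$ (i,l)
      = (\<Sum>x<n. \<Sum>y<n. (A * mat_unit n b c) $$ (x,y) * \<psi> (mat_unit n x y) $$ (i,l))"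
    using A by (intro linear_mat_map_index[OF lin _ i l]) simp
  also have "\<dots> = (\<Sum>x<n. \<Sum>y<n. if y = c then A $$ (x,b) * \<psi> (mat_unit n x y) $$ (i,l) else 0)"
    by (intro sum.cong refl) (auto simp: mult_mat_unit_right_index[OF A b])
  also have "\<dots> = (\<Sum>x<n. A $$ (x,b) * \<psi> (mat_unit n x c) $$ (i,l))" using c by simp
  finally show ?thesis .
qed

locale hom_idempotent_factors =
  fixes n r :: nat and \<psi> :: "'a::field mat \<Rightarrow> 'a mat" and k m :: nat and X1 Y1 X2 Y2 :: "'a mat"
  assumes hom: "algebra_hom_mat n r \<psi>" and n0: "0 < n"
    and X1: "X1 \<in> carrier_mat r k" and Y1: "Y1 \<in> carrier_mat k r"
    and Y1X1: "Y1 * X1 = 1\<^sub>m k" and X1Y1: "X1 * Y1 = \<psi> (mat_unit n 0 0)"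
    and X2: "X2 \<in> carrier_mat r m" and Y2: "Y2 \<in> carrier_mat m r"
    and Y2X2: "Y2 * X2 = 1\<^sub>m m" and X2Y2: "X2 * Y2 = 1\<^sub>m r - \<psi> (1\<^sub>m n)"
begin

abbreviation "P \<equiv> \<psi> (1\<^sub>m n)"
abbreviation "R \<equiv> 1\<^sub>m r - P"
abbreviation "U a b \<equiv> (mat_unit n a b :: 'a mat)"
abbreviation "N \<equiv> k * n + m"

definition V :: "nat \<Rightarrow> 'a mat" where "V a = \<psi> (U a 0) * X1"
definition W :: "nat \<Rightarrow> 'a mat" where "W a = Y1 * \<psi> (U 0 a)"

definition S :: "'a mat" where
  "S = mat r N (\<lambda>(i,c). if c < k*n then V (c mod n) $$ (i, c div n) else X2 $$ (i, c - k*n))"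
definition T :: "'a mat" where
  "T = mat N r (\<lambda>(c,j). if c < k*n then W (c mod n) $$ (c div n, j) else Y2 $$ (c - k*n, j))"

lemma lin: "linear_mat_map n r \<psi>" using hom by (rule algebra_hom_mat_linear)

lemma mult: "A \<in> carrier_mat n n \<Longrightarrow> B \<in> carrier_mat n n \<Longrightarrow> \<psi> (A * B) = \<psi> A * \<psi> B"
  using hom by (rule algebra_hom_mat_mult)

lemma psi_carrier: "A \<in> carrier_mat n n \<Longrightarrow> \<psi> A \<in> carrier_mat r r"
  using linear_mat_map_carrier[OF lin] .

lemma P_carrier: "P \<in> carrier_mat r r" by (rule psi_carrier) simp

lemma R_carrier: "R \<in> carrier_mat r r" using P_carrier by (rule minus_carrier_mat)

lemma psi_U_carrier: "\<psi> (U a b) \<in> carrier_mat r r" by (rule psi_carrier) simp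

lemma V_carrier: "V a \<in> carrier_mat r k" unfolding V_def by (rule mult_carrier_mat[OF psi_U_carrier X1])

lemma W_carrier: "W a \<in> carrier_mat k r" unfolding W_def by (rule mult_carrier_mat[OF Y1 psi_U_carrier])

lemma S_carrier: "S \<in> carrier_mat r N" by (simp add: S_def)

lemma T_carrier: "T \<in> carrier_mat N r" by (simp add: T_def)

lemma psi_mult_R: assumes A: "A \<in> carrier_mat n n" shows "\<psi> A * R = 0\<^sub>m r r"
proof -
  have "\<psi> A * R = \<psi> A * 1\<^sub>m r - \<psi> A * P"
    by (rule mult_minus_distrib_mat[OF psi_carrier[OF A] one_carrier_mat P_carrier])
  also have "\<dots> = 0\<^sub>m r r" using mult[OF A one_carrier_mat] A psi_carrier[OF A] by simp
  finally show ?thesis .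
qed

lemma R_mult_psi: assumes A: "A \<in> carrier_mat n n" shows "R * \<psi> A = 0\<^sub>m r r"
proof -
  have "R * \<psi> A = 1\<^sub>m r * \<psi> A - P * \<psi> A"
    by (rule minus_mult_distrib_mat[OF one_carrier_mat P_carrier psi_carrier[OF A]])
  also have "\<dots> = 0\<^sub>m r r" using mult[OF one_carrier_mat A] A psi_carrier[OF A] by simp
  finally show ?thesis .
qed

lemma psi_mult_X2: assumes A: "A \<in> carrier_mat n n" shows "\<psi> A * X2 = 0\<^sub>m r m"
proof -
  have "\<psi> A * X2 = \<psi> A * (X2 * Y2) * X2" using assoc_mult_mat_middle[OF psi_carrier[OF A] X2 Y2 X2] Y2X2 X2 by simp
  thus ?thesis using psi_mult_R[OF A] X2Y2 X2 by simp
qed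

lemma Y2_mult_psi: assumes A: "A \<in> carrier_mat n n" shows "Y2 * \<psi> A = 0\<^sub>m m r"
proof -
  have "Y2 * \<psi> A = Y2 * (X2 * Y2) * \<psi> A" using assoc_mult_mat_middle[OF Y2 X2 Y2 psi_carrier[OF A]] Y2X2 Y2 by simp
  thus ?thesis using R_mult_psi[OF A] X2Y2 Y2 by (simp add: assoc_mult_mat[OF Y2 R_carrier psi_carrier[OF A]])
qed

lemma W_mult_V: assumes a: "a < n" and b: "b < n"
  shows "W a * V b = (if a = b then 1\<^sub>m k else 0\<^sub>m k k)"
proof -
  have "W a * V b = Y1 * (\<psi> (U 0 a) * \<psi> (U b 0)) * X1"
    unfolding V_def W_def by (rule assoc_mult_mat_middle[OF Y1 psi_U_carrier psi_U_carrier X1])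
  also have "\<psi> (U 0 a) * \<psi> (U b 0) = \<psi> (if a = b then U 0 0 else 0\<^sub>m n n)"
    using a b by (simp add: mult[symmetric] mat_unit_mult)
  finally have e: "W a * V b = Y1 * \<psi> (if a = b then U 0 0 else 0\<^sub>m n n) * X1" .
  show ?thesis
  proof (cases "a = b")
    case True
    have "Y1 * \<psi> (U 0 0) * X1 = (Y1 * X1) * (Y1 * X1)"
      using X1Y1 assoc_mult_mat_middle[OF Y1 X1 Y1 X1] by simp
    thus ?thesis using e True Y1X1 by simp
  next
    case False
    thus ?thesis using e linear_mat_map_zero[OF lin] Y1 X1 by simp
  qed
qed

lemma W_mult_X2: "W a * X2 = 0\<^sub>m k m"
  unfolding W_def using Y1 X2 psi_mult_X2[of "U 0 a"]
  by (simp add: assoc_mult_mat[OF Y1 psi_U_carrier X2])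

lemma Y2_mult_V: "Y2 * V a = 0\<^sub>m m k"
  unfolding V_def using Y2 X1 Y2_mult_psi[of "U a 0"]
  by (simp add: assoc_mult_mat[OF Y2 psi_U_carrier X1, symmetric])

lemma V_mult_W: assumes a: "a < n" shows "V a * W a = \<psi> (U a a)"
proof -
  have "V a * W a = \<psi> (U a 0) * (X1 * Y1) * \<psi> (U 0 a)"
    unfolding V_def W_def by (rule assoc_mult_mat_middle[OF psi_U_carrier X1 Y1 psi_U_carrier])
  also have "\<dots> = \<psi> (U a 0 * U 0 0 * U 0 a)"
    using X1Y1 mult[OF mult_carrier_mat[OF mat_unit_carrier mat_unit_carrier] mat_unit_carrier]
      mult[OF mat_unit_carrier mat_unit_carrier] by simp
  also have "U a 0 * U 0 0 * U 0 a = U a a" using a n0 by (simp add: mat_unit_mult)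
  finally show ?thesis .
qed


lemma index_P: assumes ij: "i < r" "j < r"
  shows "P $$ (i,j) = (\<Sum>a<n. \<psi> (U a a) $$ (i,j))"
proof -
  have "P $$ (i,j) = (\<Sum>a<n. \<Sum>b<n. 1\<^sub>m n $$ (a,b) * \<psi> (U a b) $$ (i,j))"
    by (rule linear_mat_map_index[OF lin one_carrier_mat ij])
  also have "\<dots> = (\<Sum>a<n. \<Sum>b<n. if a = b then \<psi> (U a b) $$ (i,j) else 0)"
    by (intro sum.cong refl) auto
  finally show ?thesis by simp
qed

lemma index_psi_mult_V:
  assumes A: "A \<in> carrier_mat n n" and b: "b < n" and i: "i < r" and s: "s < k"
  shows "(\<psi> A * V b) $$ (i,s) = (\<Sum>a<n. A $$ (a,b) * V a $$ (i,s))"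
proof -
  have "\<psi> A * V b = \<psi> (A * U b 0) * X1"
    unfolding V_def using assoc_mult_mat[OF psi_carrier[OF A] psi_U_carrier X1] A by (simp add: mult)
  hence "(\<psi> A * V b) $$ (i,s) = (\<Sum>l<r. \<psi> (A * U b 0) $$ (i,l) * X1 $$ (l,s))"
    using A i s by (simp add: index_mult_mat_sum[OF psi_carrier X1])
  also have "\<dots> = (\<Sum>l<r. \<Sum>a<n. A $$ (a,b) * (\<psi> (U a 0) $$ (i,l) * X1 $$ (l,s)))"
    by (intro sum.cong refl)
      (simp add: linear_mat_map_mult_mat_unit[OF lin A b n0 i] sum_distrib_right mult.assoc)
  also have "\<dots> = (\<Sum>a<n. A $$ (a,b) * (\<Sum>l<r. \<psi> (U a 0) $$ (i,l) * X1 $$ (l,s)))"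
    by (simp add: sum.swap[of _ "{..<r}"] sum_distrib_left)
  also have "\<dots> = (\<Sum>a<n. A $$ (a,b) * V a $$ (i,s))"
    unfolding V_def using i s by (simp add: index_mult_mat_sum[OF psi_U_carrier X1])
  finally show ?thesis .
qed

lemma index_T_mult_S:
  assumes "c < N" "d < N"
  shows "(T * S) $$ (c,d) = (\<Sum>i<r. T $$ (c,i) * S $$ (i,d))"
  using assms by (intro index_mult_mat_sum[OF T_carrier S_carrier])

lemma T_mult_S_upper:
  assumes c: "c < k*n" and d: "d < N"
  shows "(T * S) $$ (c,d) = 1\<^sub>m N $$ (c,d)"
proof -
  have cN: "c < N" using c by simp
  have ct: "c div n < k" and ca: "c mod n < n" using c n0 by (simp_all add: less_mult_imp_div_less)
  show ?thesis
  proof (cases "d < k*n")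
    case True
    have dt: "d div n < k" and da: "d mod n < n" using True n0 by (simp_all add: less_mult_imp_div_less)
    have "(T * S) $$ (c,d) = (\<Sum>i<r. W (c mod n) $$ (c div n, i) * V (d mod n) $$ (i, d div n))"
      unfolding index_T_mult_S[OF cN d] using c True by (intro sum.cong) (simp_all add: S_def T_def)
    also have "\<dots> = (W (c mod n) * V (d mod n)) $$ (c div n, d div n)"
      by (rule index_mult_mat_sum[symmetric, OF W_carrier V_carrier ct dt])
    also have "\<dots> = (if c mod n = d mod n then 1\<^sub>m k else 0\<^sub>m k k) $$ (c div n, d div n)"
      using W_mult_V[OF ca da] by simp
    also have "\<dots> = 1\<^sub>m N $$ (c,d)" using ct dt cN d eq_iff_div_eq_mod_eq[OF n0, of c d] by auto
    finally show ?thesis .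
  next
    case False
    have dm: "d - k*n < m" using d False by simp
    have "(T * S) $$ (c,d) = (\<Sum>i<r. W (c mod n) $$ (c div n, i) * X2 $$ (i, d - k*n))"
      unfolding index_T_mult_S[OF cN d] using c False d by (intro sum.cong) (simp_all add: S_def T_def)
    also have "\<dots> = (W (c mod n) * X2) $$ (c div n, d - k*n)"
      by (rule index_mult_mat_sum[symmetric, OF W_carrier X2 ct dm])
    finally show ?thesis using W_mult_X2 ct dm c False d by simp
  qed
qed

lemma T_mult_S_lower:
  assumes c: "\<not> c < k*n" "c < N" and d: "d < N"
  shows "(T * S) $$ (c,d) = 1\<^sub>m N $$ (c,d)"
proof -
  have cm: "c - k*n < m" using c by simp
  show ?thesis
  proof (cases "d < k*n")
    case True
    have dt: "d div n < k" using True by (simp add: less_mult_imp_div_less)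
    have "(T * S) $$ (c,d) = (\<Sum>i<r. Y2 $$ (c - k*n, i) * V (d mod n) $$ (i, d div n))"
      unfolding index_T_mult_S[OF c(2) d] using c True by (intro sum.cong) (simp_all add: S_def T_def)
    also have "\<dots> = (Y2 * V (d mod n)) $$ (c - k*n, d div n)"
      by (rule index_mult_mat_sum[symmetric, OF Y2 V_carrier cm dt])
    finally show ?thesis using Y2_mult_V cm dt c True by simp
  next
    case False
    have dm: "d - k*n < m" using d False by simp
    have "(T * S) $$ (c,d) = (\<Sum>i<r. Y2 $$ (c - k*n, i) * X2 $$ (i, d - k*n))"
      unfolding index_T_mult_S[OF c(2) d] using c False d by (intro sum.cong) (simp_all add: S_def T_def)
    also have "\<dots> = (Y2 * X2) $$ (c - k*n, d - k*n)"
      by (rule index_mult_mat_sum[symmetric, OF Y2 X2 cm dm])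
    finally show ?thesis using Y2X2 cm dm c d False by auto
  qed
qed

lemma T_mult_S: "T * S = 1\<^sub>m N"
proof (rule eq_matI)
  fix c d assume "c < dim_row (1\<^sub>m N :: 'a mat)" "d < dim_col (1\<^sub>m N :: 'a mat)"
  thus "(T * S) $$ (c,d) = 1\<^sub>m N $$ (c,d)"
    using T_mult_S_upper T_mult_S_lower by (cases "c < k*n") auto
qed (use T_carrier S_carrier in auto)

lemma S_mult_T: "S * T = 1\<^sub>m r"
proof (rule eq_matI)
  fix i j assume "i < dim_row (1\<^sub>m r :: 'a mat)" "j < dim_col (1\<^sub>m r :: 'a mat)"
  hence ij: "i < r" "j < r" by auto
  have "(S * T) $$ (i,j) = (\<Sum>c<k*n + m. S $$ (i,c) * T $$ (c,j))"
    by (rule index_mult_mat_sum[OF S_carrier T_carrier ij])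
  also have "\<dots> = (\<Sum>t<k. \<Sum>a<n. S $$ (i,t*n+a) * T $$ (t*n+a,j)) + (\<Sum>c<m. S $$ (i,k*n+c) * T $$ (k*n+c,j))"
    by (simp add: sum_lessThan_add sum_lessThan_mult_blocks)
  also have "(\<Sum>t<k. \<Sum>a<n. S $$ (i,t*n+a) * T $$ (t*n+a,j)) = (\<Sum>a<n. \<Sum>t<k. V a $$ (i,t) * W a $$ (t,j))"
  proof (subst sum.swap, intro sum.cong refl)
    fix a t assume "a \<in> {..<n}" "t \<in> {..<k}"
    hence ta: "t < k" "a < n" by auto
    note block = block_index_bounds[OF ta]
    have "t*n + a < N" using block by simp
    thus "S $$ (i,t*n+a) * T $$ (t*n+a,j) = V a $$ (i,t) * W a $$ (t,j)"
      using block ij by (simp add: S_def T_def)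
  qed
  also have "\<dots> = (\<Sum>a<n. \<psi> (U a a) $$ (i,j))"
  proof (intro sum.cong refl)
    fix a assume "a \<in> {..<n}"
    thus "(\<Sum>t<k. V a $$ (i,t) * W a $$ (t,j)) = \<psi> (U a a) $$ (i,j)"
      using V_mult_W[of a] index_mult_mat_sum[OF V_carrier W_carrier ij, of a a] by simp
  qed
  also have "\<dots> = P $$ (i,j)" using index_P[OF ij] by simp
  also have "(\<Sum>c<m. S $$ (i,k*n+c) * T $$ (k*n+c,j)) = (X2 * Y2) $$ (i,j)"
    using ij by (simp add: S_def T_def index_mult_mat_sum[OF X2 Y2])
  also have "\<dots> = 1\<^sub>m r $$ (i,j) - P $$ (i,j)" using X2Y2 ij P_carrier by simp
  finally show "(S * T) $$ (i,j) = 1\<^sub>m r $$ (i,j)" by simp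
qed (use S_carrier T_carrier in auto)

lemma N_eq_r: "N = r"
  using left_inverse_imp_dim_le[OF S_carrier T_carrier T_mult_S]
    left_inverse_imp_dim_le[OF T_carrier S_carrier S_mult_T] by simp

lemma kn_le_r: "k * n \<le> r" using N_eq_r by simp

lemma S_carrier_square: "S \<in> carrier_mat r r" using S_carrier N_eq_r by simp

lemma T_carrier_square: "T \<in> carrier_mat r r" using T_carrier N_eq_r by simp

lemma index_psi_mult_S:
  assumes A: "A \<in> carrier_mat n n" and i: "i < r" and d: "d < r"
  shows "(\<psi> A * S) $$ (i,d) =
    (if d < k*n then \<Sum>a<n. A $$ (a, d mod n) * V a $$ (i, d div n) else 0)"
proof -
  have "(\<psi> A * S) $$ (i,d) = (\<Sum>l<r. \<psi> A $$ (i,l) * S $$ (l,d))"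
    by (rule index_mult_mat_sum[OF psi_carrier[OF A] S_carrier_square i d])
  also have "\<dots> = (if d < k*n then (\<psi> A * V (d mod n)) $$ (i, d div n) else (\<psi> A * X2) $$ (i, d - k*n))"
    using d N_eq_r n0 by (auto simp: S_def less_mult_imp_div_less
        index_mult_mat_sum[OF psi_carrier[OF A] V_carrier i] index_mult_mat_sum[OF psi_carrier[OF A] X2 i]
        intro!: sum.cong)
  also have "\<dots> = (if d < k*n then \<Sum>a<n. A $$ (a, d mod n) * V a $$ (i, d div n) else 0)"
    using d N_eq_r n0 psi_mult_X2[OF A] i
    by (auto simp: index_psi_mult_V[OF A _ i] less_mult_imp_div_less)
  finally show ?thesis .
qed

lemma index_S_mult_padded_kron_id:
  assumes A: "A \<in> carrier_mat n n" and i: "i < r" and d: "d < r"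
  shows "(S * padded_kron_id r k A) $$ (i,d) =
    (if d < k*n then \<Sum>a<n. A $$ (a, d mod n) * V a $$ (i, d div n) else 0)"
proof -
  let ?K = "padded_kron_id r k A"
  have K: "?K \<in> carrier_mat r r" by (rule padded_kron_id_carrier[OF A kn_le_r])
  have tail: "(\<Sum>c<m. S $$ (i,k*n+c) * ?K $$ (k*n+c,d)) = 0"
    using d N_eq_r index_padded_kron_id[OF A kn_le_r] by (intro sum.neutral ballI) simp
  have "(S * ?K) $$ (i,d) = (\<Sum>c<k*n + m. S $$ (i,c) * ?K $$ (c,d))"
    using index_mult_mat_sum[OF S_carrier_square K i d] N_eq_r by simp
  also have "\<dots> = (\<Sum>t<k. \<Sum>a<n. S $$ (i,t*n+a) * ?K $$ (t*n+a,d))"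
    unfolding sum_lessThan_add tail sum_lessThan_mult_blocks by simp
  also have "\<dots> = (\<Sum>t<k. \<Sum>a<n. if t = d div n \<and> d < k*n then V a $$ (i,t) * A $$ (a, d mod n) else 0)"
  proof (intro sum.cong refl)
    fix t a assume "t \<in> {..<k}" "a \<in> {..<n}"
    hence ta: "t < k" "a < n" by auto
    note block = block_index_bounds[OF ta]
    have "t*n + a < r" using block kn_le_r by simp
    thus "S $$ (i,t*n+a) * ?K $$ (t*n+a,d) = (if t = d div n \<and> d < k*n then V a $$ (i,t) * A $$ (a, d mod n) else 0)"
      using block i d index_padded_kron_id[OF A kn_le_r, of "t*n+a" d] by (auto simp: S_def)
  qed
  also have "\<dots> = (if d < k*n then \<Sum>a<n. A $$ (a, d mod n) * V a $$ (i, d div n) else 0)"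
    by (subst sum.swap) (simp add: less_mult_imp_div_less mult.commute)
  finally show ?thesis .
qed

lemma psi_eq_conj_padded_kron_id:
  assumes A: "A \<in> carrier_mat n n"
  shows "\<psi> A = S * padded_kron_id r k A * T"
proof -
  have K: "padded_kron_id r k A \<in> carrier_mat r r" by (rule padded_kron_id_carrier[OF A kn_le_r])
  have "\<psi> A * S = S * padded_kron_id r k A"
    by (rule eq_matI) (use psi_carrier[OF A] S_carrier_square K
        index_psi_mult_S[OF A] index_S_mult_padded_kron_id[OF A] in auto)
  hence "\<psi> A * (S * T) = S * padded_kron_id r k A * T"
    using assoc_mult_mat[OF psi_carrier[OF A] S_carrier_square T_carrier_square] by simp
  thus ?thesis using S_mult_T psi_carrier[OF A] by simp
qed

lemma unital_imp_dim_eq: assumes "P = 1\<^sub>m r" shows "r = n * k"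
proof -
  have "X2 * Y2 = 0\<^sub>m r r" using assms X2Y2 by simp
  hence "1\<^sub>m m = Y2 * (X2 * Y2) * X2" using Y2X2 assoc_mult_mat_middle[OF Y2 X2 Y2 X2] by simp
  also have "\<dots> = 0\<^sub>m m m" using \<open>X2 * Y2 = 0\<^sub>m r r\<close> Y2 X2 by simp
  finally have "m = 0" by (metis index_one_mat(1) index_zero_mat(1) neq0_conv zero_neq_one)
  thus ?thesis using N_eq_r by (simp add: mult.commute)
qed

end

lemma padded_kron_id_zero_blocks:
  assumes A: "A \<in> carrier_mat n n"
  shows "padded_kron_id r 0 A = 0\<^sub>m r r"
proof (rule eq_matI)
  have K: "padded_kron_id r 0 A \<in> carrier_mat r r" by (rule padded_kron_id_carrier[OF A]) simp
  show "dim_row (padded_kron_id r 0 A) = dim_row (0\<^sub>m r r :: 'a mat)"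
       "dim_col (padded_kron_id r 0 A) = dim_col (0\<^sub>m r r :: 'a mat)" using K by auto
  fix i j assume "i < dim_row (0\<^sub>m r r :: 'a mat)" "j < dim_col (0\<^sub>m r r :: 'a mat)"
  thus "padded_kron_id r 0 A $$ (i,j) = 0\<^sub>m r r $$ (i,j)" using index_padded_kron_id[OF A, of 0 r i j] by simp
qed

lemma zero_mat_eq_one_mat_iff: "(0\<^sub>m r r :: 'a::zero_neq_one mat) = 1\<^sub>m r \<longleftrightarrow> r = 0"
proof
  assume "0\<^sub>m r r = (1\<^sub>m r :: 'a mat)"
  hence "0 < r \<Longrightarrow> (0\<^sub>m r r :: 'a mat) $$ (0,0) = 1\<^sub>m r $$ (0,0)" by simp
  thus "r = 0" by (cases "r = 0") auto
qed auto

theorem algebra_hom_mat_similar_padded_kron_id: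
  fixes \<psi> :: "'a::field mat \<Rightarrow> 'a mat"
  assumes hom: "algebra_hom_mat n r \<psi>"
  obtains k S Sinv where "k * n \<le> r" "S \<in> carrier_mat r r" "Sinv \<in> carrier_mat r r"
    "S * Sinv = 1\<^sub>m r" "Sinv * S = 1\<^sub>m r"
    "\<And>A. A \<in> carrier_mat n n \<Longrightarrow> \<psi> A = S * padded_kron_id r k A * Sinv"
    "\<psi> (1\<^sub>m n) = 1\<^sub>m r \<Longrightarrow> r = n * k"
proof (cases "n = 0")
  case True
  have zero: "\<psi> A = 0\<^sub>m r r" if "A \<in> carrier_mat n n" for A
  proof -
    have "A = 0\<^sub>m n n" using that True by (intro eq_matI) auto
    thus ?thesis using linear_mat_map_zero[OF algebra_hom_mat_linear[OF hom]] by simp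
  qed
  show ?thesis
  proof (rule that[of 0 "1\<^sub>m r" "1\<^sub>m r"])
    show "\<psi> A = 1\<^sub>m r * padded_kron_id r 0 A * 1\<^sub>m r" if "A \<in> carrier_mat n n" for A
      using zero[OF that] padded_kron_id_zero_blocks[OF that] by simp
    show "r = n * 0" if "\<psi> (1\<^sub>m n) = 1\<^sub>m r"
    proof -
      have "0\<^sub>m r r = (1\<^sub>m r :: 'a mat)" using that zero[OF one_carrier_mat] by simp
      thus ?thesis using zero_mat_eq_one_mat_iff[THEN iffD1] by simp
    qed
  qed auto
next
  case False
  have lin: "linear_mat_map n r \<psi>" by (rule algebra_hom_mat_linear[OF hom])
  let ?Q = "\<psi> (mat_unit n 0 0)" and ?P = "\<psi> (1\<^sub>m n)"
  have Q: "?Q \<in> carrier_mat r r" and P: "?P \<in> carrier_mat r r"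
    by (simp_all add: linear_mat_map_carrier[OF lin])
  have QQ: "?Q * ?Q = ?Q" using False algebra_hom_mat_mult[OF hom, of "mat_unit n 0 0" "mat_unit n 0 0"]
    by (simp add: mat_unit_mult)
  have PP: "?P * ?P = ?P" using algebra_hom_mat_mult[OF hom one_carrier_mat one_carrier_mat] by simp
  obtain k X1 Y1 where "X1 \<in> carrier_mat r k" "Y1 \<in> carrier_mat k r" "Y1 * X1 = 1\<^sub>m k" "X1 * Y1 = ?Q"
    by (rule idempotent_mat_factor[OF Q QQ])
  moreover obtain m X2 Y2 where "X2 \<in> carrier_mat r m" "Y2 \<in> carrier_mat m r" "Y2 * X2 = 1\<^sub>m m" "X2 * Y2 = 1\<^sub>m r - ?P"
    by (rule idempotent_mat_factor[OF minus_carrier_mat[OF P] idempotent_compl_mat[OF P PP]])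
  ultimately interpret hom_idempotent_factors n r \<psi> k m X1 Y1 X2 Y2
    using hom False by unfold_locales auto
  show ?thesis
    by (rule that[OF kn_le_r S_carrier_square T_carrier_square S_mult_T])
      (use T_mult_S N_eq_r psi_eq_conj_padded_kron_id unital_imp_dim_eq in auto)
qed

section \<open>Zero product preservers\<close>

lemma diff_eq_zero_mat_imp_eq:
  assumes "X \<in> carrier_mat a b" "Y \<in> carrier_mat a b" "X - Y = 0\<^sub>m a b"
  shows "X = (Y :: 'a::ring mat)"
proof (rule eq_matI)
  fix i j assume ij: "i < dim_row Y" "j < dim_col Y"
  have "(X - Y) $$ (i,j) = 0" using assms ij by simp
  thus "X $$ (i,j) = Y $$ (i,j)" using ij assms(1,2) by simp
qed (use assms in auto)

lemma zero_product_preserver_shift_idempotent: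
  fixes \<Phi> :: "'a::field mat \<Rightarrow> 'a mat"
  assumes lin: "linear_mat_map n r \<Phi>" and zp: "preserves_zero_products n r \<Phi>"
    and A: "A \<in> carrier_mat n n" and B: "B \<in> carrier_mat n n"
    and E: "E \<in> carrier_mat n n" and EE: "E * E = E"
  shows "\<Phi> (A * E) * \<Phi> B = \<Phi> A * \<Phi> (E * B)"
proof -
  have I: "1\<^sub>m n \<in> carrier_mat n n" by simp
  have IE: "1\<^sub>m n - E \<in> carrier_mat n n" using E by (rule minus_carrier_mat)
  have E1: "E * (1\<^sub>m n - E) = 0\<^sub>m n n" using E EE by (simp add: mult_minus_distrib_mat[OF E I E])
  have E2: "(1\<^sub>m n - E) * E = 0\<^sub>m n n" using E EE by (simp add: minus_mult_distrib_mat[OF I E E])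
  have q1: "(1\<^sub>m n - E) * B = B - E * B" using E B by (simp add: minus_mult_distrib_mat[OF I E B])
  have q2: "A * (1\<^sub>m n - E) = A - A * E" using A E by (simp add: mult_minus_distrib_mat[OF A I E])
  have AE: "A * E \<in> carrier_mat n n" and EB: "E * B \<in> carrier_mat n n" using A B E by auto
  have PA: "\<Phi> A \<in> carrier_mat r r" and PB: "\<Phi> B \<in> carrier_mat r r"
    and PAE: "\<Phi> (A * E) \<in> carrier_mat r r" and PEB: "\<Phi> (E * B) \<in> carrier_mat r r"
    using linear_mat_map_carrier[OF lin] A B AE EB by auto
  have IEB: "(1\<^sub>m n - E) * B \<in> carrier_mat n n" and AIE: "A * (1\<^sub>m n - E) \<in> carrier_mat n n"
    using A B IE by auto
  have "(A * E) * ((1\<^sub>m n - E) * B) = A * (E * (1\<^sub>m n - E)) * B"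
    by (rule assoc_mult_mat_middle[OF A E IE B])
  also have "\<dots> = 0\<^sub>m n n" using A B by (simp add: E1)
  finally have "\<Phi> (A * E) * \<Phi> ((1\<^sub>m n - E) * B) = 0\<^sub>m r r"
    using zp AE IEB unfolding preserves_zero_products_def by blast
  hence "\<Phi> (A * E) * (\<Phi> B - \<Phi> (E * B)) = 0\<^sub>m r r"
    using q1 linear_mat_map_minus[OF lin B EB] by simp
  hence "\<Phi> (A * E) * \<Phi> B - \<Phi> (A * E) * \<Phi> (E * B) = 0\<^sub>m r r"
    by (simp add: mult_minus_distrib_mat[OF PAE PB PEB])
  hence r1: "\<Phi> (A * E) * \<Phi> B = \<Phi> (A * E) * \<Phi> (E * B)"
    by (rule diff_eq_zero_mat_imp_eq[rotated 2]) (use PAE PB PEB in auto)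
  have "(A * (1\<^sub>m n - E)) * (E * B) = A * ((1\<^sub>m n - E) * E) * B"
    by (rule assoc_mult_mat_middle[OF A IE E B])
  also have "\<dots> = 0\<^sub>m n n" using A B by (simp add: E2)
  finally have "\<Phi> (A * (1\<^sub>m n - E)) * \<Phi> (E * B) = 0\<^sub>m r r"
    using zp AIE EB unfolding preserves_zero_products_def by blast
  hence "(\<Phi> A - \<Phi> (A * E)) * \<Phi> (E * B) = 0\<^sub>m r r"
    using q2 linear_mat_map_minus[OF lin A AE] by simp
  hence "\<Phi> A * \<Phi> (E * B) - \<Phi> (A * E) * \<Phi> (E * B) = 0\<^sub>m r r"
    by (simp add: minus_mult_distrib_mat[OF PA PAE PEB])
  hence r2: "\<Phi> A * \<Phi> (E * B) = \<Phi> (A * E) * \<Phi> (E * B)"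
    by (rule diff_eq_zero_mat_imp_eq[rotated 2]) (use PA PAE PEB in auto)
  show ?thesis using r1 r2 by simp
qed

lemma zero_product_preserver_shift:
  fixes \<Phi> :: "'a::field mat \<Rightarrow> 'a mat"
  assumes lin: "linear_mat_map n r \<Phi>" and zp: "preserves_zero_products n r \<Phi>"
    and A: "A \<in> carrier_mat n n" and B: "B \<in> carrier_mat n n" and E: "E \<in> carrier_mat n n"
  shows "\<Phi> (A * E) * \<Phi> B = \<Phi> A * \<Phi> (E * B)"
proof (rule linear_mat_maps_eq_on_idempotents[OF _ _ _ E])
  have \<Phi>: "\<Phi> A \<in> carrier_mat r r" "\<Phi> B \<in> carrier_mat r r"
    using A B by (auto intro: linear_mat_map_carrier[OF lin])
  show "linear_mat_map n r (\<lambda>E. \<Phi> (A * E) * \<Phi> B)"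
    using linear_mat_map_sandwich[OF lin A one_carrier_mat one_carrier_mat \<Phi>(2)]
  proof (rule linear_mat_map_cong)
    fix X :: "'a mat" assume X: "X \<in> carrier_mat n n"
    show "1\<^sub>m r * \<Phi> (A * X * 1\<^sub>m n) * \<Phi> B = \<Phi> (A * X) * \<Phi> B"
      using A X linear_mat_map_carrier[OF lin mult_carrier_mat[OF A X]] by simp
  qed
  show "linear_mat_map n r (\<lambda>E. \<Phi> A * \<Phi> (E * B))"
    using linear_mat_map_sandwich[OF lin one_carrier_mat B \<Phi>(1) one_carrier_mat]
  proof (rule linear_mat_map_cong)
    fix X :: "'a mat" assume X: "X \<in> carrier_mat n n"
    show "\<Phi> A * \<Phi> (1\<^sub>m n * X * B) * 1\<^sub>m r = \<Phi> A * \<Phi> (X * B)"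
      using B X \<Phi> linear_mat_map_carrier[OF lin mult_carrier_mat[OF X B]] by simp
  qed
qed (rule zero_product_preserver_shift_idempotent[OF lin zp A B])

lemma zero_product_preserver_mult:
  fixes \<Phi> :: "'a::field mat \<Rightarrow> 'a mat"
  assumes lin: "linear_mat_map n r \<Phi>" and zp: "preserves_zero_products n r \<Phi>"
    and A: "A \<in> carrier_mat n n" and B: "B \<in> carrier_mat n n"
  shows "\<Phi> A * \<Phi> B = \<Phi> (1\<^sub>m n) * \<Phi> (A * B)"
  using zero_product_preserver_shift[OF lin zp one_carrier_mat B A] A by simp

lemma zero_product_preserver_commute:
  fixes \<Phi> :: "'a::field mat \<Rightarrow> 'a mat"
  assumes lin: "linear_mat_map n r \<Phi>" and zp: "preserves_zero_products n r \<Phi>"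
    and A: "A \<in> carrier_mat n n"
  shows "\<Phi> (1\<^sub>m n) * \<Phi> A = \<Phi> A * \<Phi> (1\<^sub>m n)"
  using zero_product_preserver_mult[OF lin zp A one_carrier_mat] A by simp

lemma linear_mat_map_mult_left:
  fixes \<Phi> :: "'a::field mat \<Rightarrow> 'a mat"
  assumes lin: "linear_mat_map n r \<Phi>" and M: "M \<in> carrier_mat r r"
  shows "linear_mat_map n r (\<lambda>A. M * \<Phi> A)"
proof (rule linear_mat_map_cong[OF linear_mat_map_sandwich[OF lin one_carrier_mat one_carrier_mat M one_carrier_mat]])
  fix A :: "'a mat" assume A: "A \<in> carrier_mat n n"
  show "M * \<Phi> (1\<^sub>m n * A * 1\<^sub>m n) * 1\<^sub>m r = M * \<Phi> A"
    using A M linear_mat_map_carrier[OF lin A] by simp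
qed

lemma mat_eq_mult_add_compl_mult:
  assumes "M \<in> carrier_mat r c" "P \<in> carrier_mat r r"
  shows "M = P * M + (1\<^sub>m r - P) * (M :: 'a::ring_1 mat)"
  using assms by (intro eq_matI) (auto simp: minus_mult_distrib_mat[of _ r r])

lemma zero_product_preserver_unit_part_hom:
  fixes \<Phi> :: "'a::field mat \<Rightarrow> 'a mat"
  assumes lin: "linear_mat_map n r \<Phi>" and zp: "preserves_zero_products n r \<Phi>"
    and idem: "\<Phi> (1\<^sub>m n) * \<Phi> (1\<^sub>m n) = \<Phi> (1\<^sub>m n)"
  shows "algebra_hom_mat n r (\<lambda>A. \<Phi> (1\<^sub>m n) * \<Phi> A)"
  unfolding algebra_hom_mat_def
proof (intro conjI ballI)
  let ?P = "\<Phi> (1\<^sub>m n)"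
  have P: "?P \<in> carrier_mat r r" by (simp add: linear_mat_map_carrier[OF lin])
  show "linear_mat_map n r (\<lambda>A. ?P * \<Phi> A)" by (rule linear_mat_map_mult_left[OF lin P])
  fix A B :: "'a mat" assume A: "A \<in> carrier_mat n n" and B: "B \<in> carrier_mat n n"
  have \<Phi>A: "\<Phi> A \<in> carrier_mat r r" and \<Phi>B: "\<Phi> B \<in> carrier_mat r r"
    using A B by (simp_all add: linear_mat_map_carrier[OF lin])
  have \<Phi>AB: "\<Phi> (A * B) \<in> carrier_mat r r" using A B by (simp add: linear_mat_map_carrier[OF lin])
  have "?P * \<Phi> A * (?P * \<Phi> B) = ?P * (?P * \<Phi> A) * \<Phi> B"
    using assoc_mult_mat_middle[OF P \<Phi>A P \<Phi>B] zero_product_preserver_commute[OF lin zp A] by simp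
  also have "\<dots> = ?P * \<Phi> A * \<Phi> B" using assoc_mult_mat[OF P P \<Phi>A] idem by simp
  also have "\<dots> = ?P * (?P * \<Phi> (A * B))"
    using assoc_mult_mat[OF P \<Phi>A \<Phi>B] zero_product_preserver_mult[OF lin zp A B] by simp
  also have "\<dots> = ?P * \<Phi> (A * B)" using assoc_mult_mat[OF P P \<Phi>AB] idem by simp
  finally show "?P * \<Phi> (A * B) = ?P * \<Phi> A * (?P * \<Phi> B)" ..
qed

lemma zero_product_preserver_compl_part_square_zero:
  fixes \<Phi> :: "'a::field mat \<Rightarrow> 'a mat"
  assumes lin: "linear_mat_map n r \<Phi>" and zp: "preserves_zero_products n r \<Phi>"
    and idem: "\<Phi> (1\<^sub>m n) * \<Phi> (1\<^sub>m n) = \<Phi> (1\<^sub>m n)"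
    and X: "X \<in> carrier_mat n n" and Y: "Y \<in> carrier_mat n n"
  shows "((1\<^sub>m r - \<Phi> (1\<^sub>m n)) * \<Phi> X) * ((1\<^sub>m r - \<Phi> (1\<^sub>m n)) * \<Phi> Y) = 0\<^sub>m r r"
proof -
  let ?P = "\<Phi> (1\<^sub>m n)"
  let ?R = "1\<^sub>m r - ?P"
  have P: "?P \<in> carrier_mat r r" by (simp add: linear_mat_map_carrier[OF lin])
  have R: "?R \<in> carrier_mat r r" using P by (rule minus_carrier_mat)
  have \<Phi>X: "\<Phi> X \<in> carrier_mat r r" and \<Phi>Y: "\<Phi> Y \<in> carrier_mat r r"
    and \<Phi>XY: "\<Phi> (X * Y) \<in> carrier_mat r r"
    using X Y by (simp_all add: linear_mat_map_carrier[OF lin])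
  have RR: "?R * ?R = ?R" by (rule idempotent_compl_mat[OF P idem])
  have RP: "?R * ?P = 0\<^sub>m r r" using P idem by (simp add: minus_mult_distrib_mat[OF one_carrier_mat P P])
  have commute: "\<Phi> X * ?R = ?R * \<Phi> X"
    using P \<Phi>X zero_product_preserver_commute[OF lin zp X]
    by (simp add: mult_minus_distrib_mat[OF \<Phi>X one_carrier_mat P] minus_mult_distrib_mat[OF one_carrier_mat P \<Phi>X])
  have "?R * \<Phi> X * (?R * \<Phi> Y) = ?R * (?R * \<Phi> X) * \<Phi> Y"
    using assoc_mult_mat_middle[OF R \<Phi>X R \<Phi>Y] commute by simp
  also have "\<dots> = ?R * \<Phi> X * \<Phi> Y" using assoc_mult_mat[OF R R \<Phi>X] RR by simp
  also have "\<dots> = ?R * (?P * \<Phi> (X * Y))"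
    using assoc_mult_mat[OF R \<Phi>X \<Phi>Y] zero_product_preserver_mult[OF lin zp X Y] by simp
  also have "\<dots> = (?R * ?P) * \<Phi> (X * Y)" using assoc_mult_mat[OF R P \<Phi>XY] by simp
  also have "\<dots> = 0\<^sub>m r r" using RP \<Phi>XY by simp
  finally show ?thesis .
qed

lemma zero_product_preserver_unital_hom:
  fixes \<Phi> :: "'a::field mat \<Rightarrow> 'a mat"
  assumes lin: "linear_mat_map n r \<Phi>" and zp: "preserves_zero_products n r \<Phi>"
    and unital: "\<Phi> (1\<^sub>m n) = 1\<^sub>m r"
  shows "algebra_hom_mat n r \<Phi>"
  unfolding algebra_hom_mat_def
proof (intro conjI ballI)
  fix A B :: "'a mat" assume A: "A \<in> carrier_mat n n" and B: "B \<in> carrier_mat n n"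
  show "\<Phi> (A * B) = \<Phi> A * \<Phi> B"
    using zero_product_preserver_mult[OF lin zp A B] unital
      linear_mat_map_carrier[OF lin mult_carrier_mat[OF A B]] by simp
qed (rule lin)

theorem corollary3p4:
  fixes \<Phi> :: "'a::field mat \<Rightarrow> 'a mat" and n r :: nat
  assumes lin: "linear_mat_map n r \<Phi>"
    and zp: "preserves_zero_products n r \<Phi>"
    and idem: "\<Phi> (1\<^sub>m n) * \<Phi> (1\<^sub>m n) = \<Phi> (1\<^sub>m n)"
  shows "\<exists>k S Sinv. k * n \<le> r \<and> S \<in> carrier_mat r r \<and> Sinv \<in> carrier_mat r r \<and>
           S * Sinv = 1\<^sub>m r \<and> Sinv * S = 1\<^sub>m r \<and>
           (\<forall>A \<in> carrier_mat n n.
              \<Phi> (1\<^sub>m n) * \<Phi> A = \<Phi> A * \<Phi> (1\<^sub>m n) \<and>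
              \<Phi> (1\<^sub>m n) * \<Phi> A = S * padded_kron_id r k A * Sinv) \<and>
           algebra_hom_mat n r (\<lambda>A. \<Phi> (1\<^sub>m n) * \<Phi> A) \<and>
           linear_mat_map n r (\<lambda>A. (1\<^sub>m r - \<Phi> (1\<^sub>m n)) * \<Phi> A) \<and>
           (\<forall>X \<in> carrier_mat n n. \<forall>Y \<in> carrier_mat n n.
              ((1\<^sub>m r - \<Phi> (1\<^sub>m n)) * \<Phi> X) * ((1\<^sub>m r - \<Phi> (1\<^sub>m n)) * \<Phi> Y) = 0\<^sub>m r r) \<and>
           (\<forall>A \<in> carrier_mat n n.
              \<Phi> A = \<Phi> (1\<^sub>m n) * \<Phi> A + (1\<^sub>m r - \<Phi> (1\<^sub>m n)) * \<Phi> A) \<and>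
           (\<Phi> (1\<^sub>m n) = 1\<^sub>m r \<longrightarrow>
              r = n * k \<and> algebra_hom_mat n r \<Phi> \<and>
              (\<forall>A \<in> carrier_mat n n. \<Phi> A = S * kron_id k A * Sinv))"
proof -
  let ?P = "\<Phi> (1\<^sub>m n)"
  have P: "?P \<in> carrier_mat r r" by (simp add: linear_mat_map_carrier[OF lin])
  have hom: "algebra_hom_mat n r (\<lambda>A. ?P * \<Phi> A)"
    by (rule zero_product_preserver_unit_part_hom[OF lin zp idem])
  obtain k S Sinv where kn: "k * n \<le> r" and S: "S \<in> carrier_mat r r" "Sinv \<in> carrier_mat r r"
    "S * Sinv = 1\<^sub>m r" "Sinv * S = 1\<^sub>m r"
    and conj: "\<And>A. A \<in> carrier_mat n n \<Longrightarrow> ?P * \<Phi> A = S * padded_kron_id r k A * Sinv"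
    and square: "?P * ?P = 1\<^sub>m r \<Longrightarrow> r = n * k"
    using algebra_hom_mat_similar_padded_kron_id[OF hom] by blast
  have unital: "?P = 1\<^sub>m r \<longrightarrow> r = n * k \<and> algebra_hom_mat n r \<Phi> \<and> (\<forall>A \<in> carrier_mat n n. \<Phi> A = S * kron_id k A * Sinv)"
  proof (intro impI conjI ballI)
    assume unit: "?P = 1\<^sub>m r"
    show r: "r = n * k" using square unit by simp
    show "algebra_hom_mat n r \<Phi>" by (rule zero_product_preserver_unital_hom[OF lin zp unit])
    fix A :: "'a mat" assume A: "A \<in> carrier_mat n n"
    have "\<Phi> A = ?P * \<Phi> A" using unit linear_mat_map_carrier[OF lin A] by simp
    also have "\<dots> = S * padded_kron_id (k * n) k A * Sinv" using conj[OF A] r by (simp add: mult.commute)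
    finally show "\<Phi> A = S * kron_id k A * Sinv" using padded_kron_id_full[OF A] by simp
  qed
  have "\<forall>A \<in> carrier_mat n n. ?P * \<Phi> A = \<Phi> A * ?P \<and> ?P * \<Phi> A = S * padded_kron_id r k A * Sinv"
    using zero_product_preserver_commute[OF lin zp] conj by blast
  moreover have "\<forall>X \<in> carrier_mat n n. \<forall>Y \<in> carrier_mat n n.
      ((1\<^sub>m r - ?P) * \<Phi> X) * ((1\<^sub>m r - ?P) * \<Phi> Y) = 0\<^sub>m r r"
    using zero_product_preserver_compl_part_square_zero[OF lin zp idem] by blast
  moreover have "\<forall>A \<in> carrier_mat n n. \<Phi> A = ?P * \<Phi> A + (1\<^sub>m r - ?P) * \<Phi> A"
    using mat_eq_mult_add_compl_mult[OF linear_mat_map_carrier[OF lin] P] by blast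
  ultimately show ?thesis
    using kn S hom linear_mat_map_mult_left[OF lin minus_carrier_mat[OF P]] unital
    by (intro exI[of _ k] exI[of _ S] exI[of _ Sinv] conjI) assumption+
qed

end
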